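(* Let $K$ be a field and $\nu$ a valuation on $K[x]$. Let $\mathbf{Q}\subseteq K[x]$ be a complete set for $\nu$. Then for every polynomial $p\in K[x]$ there exist $a_1,\ldots,a_r\in K$ and $\lambda_1,\ldots,\lambda_r\in\mathbb{N}^{\mathbf{Q}}$ such that \[ p=\sum_{i=1}^r a_i\mathbf{Q}^{\lambda_i}\quad\text{and}\quad \nu\left(a_i\mathbf{Q}^{\lambda_i}\right)\geq \nu(p)\ \text{ for every } i,\ 1\leq i\leq r, \] and every $Q\in\mathbf{Q}$ appearing in this decomposition (i.e. with $\lambda_i(Q)\neq 0$ for some $i$) satisfies $\deg(Q)\leq\deg(p)$. In particular, for every $\beta\in\nu(K[x])$, the additive group $P_\beta=\{y\in K[x]\mid \nu(y)\geq\beta\}$ is generated by the elements $a\mathbf{Q}^\lambda$ lying in $P_\beta$, where $a\in K$ and $\lambda\in\mathbb{N}^{\mathbf{Q}}$.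
   Context: A valuation on a commutative ring $R$ is a map $\nu:R\to\Gamma\cup\{\infty\}$, $\Gamma$ an ordered abelian group, with $\nu(ab)=\nu(a)+\nu(b)$, $\nu(a+b)\geq\min\{\nu(a),\nu(b)\}$, $\nu(1)=0$, $\nu(0)=\infty$ (nonzero elements may have value $\infty$). For a nonconstant monic $q\in K[x]$ and $f\in K[x]$, the $q$-expansion of $f$ is the unique expression $f=f_0+f_1q+\cdots+f_nq^n$ with each $f_i=0$ or $\deg(f_i)<\deg(q)$; the $q$-truncation of $\nu$ is $\nu_q(f):=\min_{0\leq i\leq n}\nu(f_iq^i)$. A set $\mathbf{Q}$ of nonconstant monic polynomials in $K[x]$ is a complete set for $\nu$ if for every nonconstant $p\in K[x]$ there exists $q\in\mathbf{Q}$ with $\deg(q)\leq\deg(p)$ and $\nu(p)=\nu_q(p)$. $\mathbb{N}^{\mathbf{Q}}$ denotes the set of maps $\lambda:\mathbf{Q}\to\mathbb{N}$ with $\lambda(q)=0$ for all but finitely many $q$, and $\mathbf{Q}^\lambda:=\prod_{q\in\mathbf{Q}}q^{\lambda(q)}$. *)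

theory Defs
  imports "HOL-Computational_Algebra.Polynomial"
begin

datatype 'g vext = Fin 'g | Infty

instantiation vext :: (linorder) linorder
begin
fun less_eq_vext :: "'a vext \<Rightarrow> 'a vext \<Rightarrow> bool" where
  "less_eq_vext _ Infty = True"
| "less_eq_vext Infty (Fin _) = False"
| "less_eq_vext (Fin a) (Fin b) = (a \<le> b)"
definition less_vext :: "'a vext \<Rightarrow> 'a vext \<Rightarrow> bool" where
  "less_vext a b = (a \<le> b \<and> \<not> b \<le> a)"
instance
proof
  fix x y z :: "'a vext"
  show "(x < y) = (x \<le> y \<and> \<not> y \<le> x)" by (simp add: less_vext_def)
  show "x \<le> x" by (cases x) auto
  show "x \<le> y \<Longrightarrow> y \<le> z \<Longrightarrow> x \<le> z"
    by (cases x; cases y; cases z) auto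
  show "x \<le> y \<Longrightarrow> y \<le> x \<Longrightarrow> x = y"
    by (cases x; cases y) auto
  show "x \<le> y \<or> y \<le> x" by (cases x; cases y) auto
qed
end

fun vadd :: "'g::ab_group_add vext \<Rightarrow> 'g vext \<Rightarrow> 'g vext" where
  "vadd (Fin a) (Fin b) = Fin (a + b)"
| "vadd _ _ = Infty"

text \<open>Valuation on the commutative ring K[x] with values in an ordered abelian group
  together with infinity (nonzero elements may have value infinity).\<close>
definition valuation :: "('a::field poly \<Rightarrow> 'g::linordered_ab_group_add vext) \<Rightarrow> bool" where
  "valuation \<nu> \<longleftrightarrow>
     (\<forall>a b. \<nu> (a * b) = vadd (\<nu> a) (\<nu> b)) \<and>
     (\<forall>a b. \<nu> (a + b) \<ge> min (\<nu> a) (\<nu> b)) \<and>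
     \<nu> 1 = Fin 0 \<and> \<nu> 0 = Infty"

definition qexp_coeffs :: "'a::field poly \<Rightarrow> 'a poly \<Rightarrow> nat \<Rightarrow> 'a poly" where
  "qexp_coeffs q f = (THE c. f = (\<Sum>i\<le>degree f. c i * q ^ i) \<and>
       (\<forall>i. c i = 0 \<or> degree (c i) < degree q) \<and> (\<forall>i>degree f. c i = 0))"

definition qtrunc :: "('a::field poly \<Rightarrow> 'g::linorder vext) \<Rightarrow> 'a poly \<Rightarrow> 'a poly \<Rightarrow> 'g vext" where
  "qtrunc \<nu> q f = Min ((\<lambda>i. \<nu> (qexp_coeffs q f i * q ^ i)) ` {..degree f})"

definition complete_set :: "('a::field poly \<Rightarrow> 'g::linorder vext) \<Rightarrow> 'a poly set \<Rightarrow> bool" where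
  "complete_set \<nu> Q \<longleftrightarrow>
     (\<forall>q\<in>Q. lead_coeff q = 1 \<and> degree q > 0) \<and>
     (\<forall>p. degree p > 0 \<longrightarrow> (\<exists>q\<in>Q. degree q \<le> degree p \<and> \<nu> p = qtrunc \<nu> q p))"

definition NQ :: "'a poly set \<Rightarrow> ('a poly \<Rightarrow> nat) set" where
  "NQ Q = {lam. finite {q. lam q \<noteq> 0} \<and> {q. lam q \<noteq> 0} \<subseteq> Q}"

definition Qpow :: "('a::comm_semiring_1 poly \<Rightarrow> nat) \<Rightarrow> 'a poly" where
  "Qpow lam = (\<Prod>q\<in>{q. lam q \<noteq> 0}. q ^ lam q)"

definition add_subgroup_gen :: "'b::ab_group_add set \<Rightarrow> 'b set" where
  "add_subgroup_gen S = \<Inter>{H. 0 \<in> H \<and> (\<forall>x\<in>H. \<forall>y\<in>H. x - y \<in> H) \<and> S \<subseteq> H}"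

end

theory Submission
  imports Defs
begin

text \<open>Induction on the degree. A constant is itself a monomial. Otherwise pick q \<in> Q with
  deg q \<le> deg p and \<nu>(p) = \<nu>_q(p), and write p = \<Sum> p_i q^i; each p_i has smaller degree, so by
  induction it is a sum of monomials of value \<ge> \<nu>(p_i) built from elements of Q of degree
  \<le> deg p_i. Multiplying by q^i keeps them monomials, and their values become
  \<ge> \<nu>(p_i q^i) \<ge> \<nu>_q(p) = \<nu>(p). The second statement follows because
  {y. \<nu> y \<ge> \<beta>} is an additive subgroup.\<close>

lemma poly_add_mult_eq_cancel:
  fixes q :: "'a::field poly"
  assumes "degree q > 0" "a = 0 \<or> degree a < degree q" "a' = 0 \<or> degree a' < degree q"
    and "a + q * b = a' + q * b'"
  shows "a = a' \<and> b = b'"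
proof (cases "b = b'")
  case False
  have "q \<noteq> 0" using assms(1) by auto
  have "a - a' = q * (b' - b)" using assms(4) by (simp add: algebra_simps)
  moreover have "degree (q * (b' - b)) \<ge> degree q"
    using False \<open>q \<noteq> 0\<close> by (simp add: degree_mult_eq)
  moreover have "degree a < degree q" "degree a' < degree q" using assms(1-3) by auto
  then have "degree (a - a') < degree q" using degree_diff_le_max[of a a'] by simp
  ultimately show ?thesis by simp
qed (use assms in simp)

lemma qexpansion_exists:
  fixes q :: "'a::field poly"
  assumes q: "degree q > 0"
  shows "\<exists>c. f = (\<Sum>i\<le>degree f. c i * q ^ i) \<and>
             (\<forall>i. c i = 0 \<or> degree (c i) < degree q) \<and> (\<forall>i>degree f. c i = 0)"
proof (induction "degree f" arbitrary: f rule: less_induct)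
  case less
  show ?case
  proof (cases "degree f")
    case 0
    then show ?thesis using q by (intro exI[of _ "\<lambda>i. if i = 0 then f else 0"]) auto
  next
    case (Suc m)
    define g where "g = f div q"
    have dg: "degree g < degree f" unfolding g_def using Suc q by (intro degree_div_less) auto
    from less[OF dg] obtain c' where c': "g = (\<Sum>i\<le>degree g. c' i * q ^ i)"
      "\<forall>i. c' i = 0 \<or> degree (c' i) < degree q" "\<forall>i>degree g. c' i = 0" by blast
    define c where "c i = (if i = 0 then f mod q else c' (i - 1))" for i
    have "(\<Sum>i\<le>m. c' i * q ^ i) = (\<Sum>i\<le>degree g. c' i * q ^ i)"
      using c'(3) dg Suc by (intro sum.mono_neutral_right) auto
    then have digits_g: "(\<Sum>i\<le>m. c' i * q ^ i) = g" using c'(1) by simp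
    have "(\<Sum>i\<le>degree f. c i * q ^ i) = f mod q + (\<Sum>i\<le>m. c' i * q ^ Suc i)"
      by (simp add: Suc sum.atMost_Suc_shift c_def del: sum.atMost_Suc)
    also have "\<dots> = f mod q + q * (\<Sum>i\<le>m. c' i * q ^ i)"
      by (simp add: sum_distrib_left algebra_simps)
    also have "\<dots> = f" by (simp add: digits_g g_def mult.commute)
    finally have "f = (\<Sum>i\<le>degree f. c i * q ^ i)" ..
    moreover have "\<forall>i. c i = 0 \<or> degree (c i) < degree q"
      using c'(2) degree_mod_less[of q f] q by (cases "q = 0") (auto simp: c_def)
    moreover have "\<forall>i>degree f. c i = 0" using c'(3) dg by (auto simp: c_def)
    ultimately show ?thesis by blast
  qed
qed

lemma qexpansion_unique:
  fixes q :: "'a::field poly"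
  assumes "degree q > 0" "\<forall>i. c i = 0 \<or> degree (c i) < degree q" "\<forall>i. d i = 0 \<or> degree (d i) < degree q"
    and "(\<Sum>i\<le>n. c i * q ^ i) = (\<Sum>i\<le>n. d i * q ^ i)" "i \<le> n"
  shows "c i = d i"
  using assms(2-)
proof (induction n arbitrary: c d i)
  case (Suc n)
  have "c 0 + q * (\<Sum>i\<le>n. c (Suc i) * q ^ i) = d 0 + q * (\<Sum>i\<le>n. d (Suc i) * q ^ i)"
    using Suc.prems(3)
    by (simp add: sum.atMost_Suc_shift sum_distrib_left algebra_simps del: sum.atMost_Suc)
  with assms(1) Suc.prems(1,2) have "c 0 = d 0"
    and tail: "(\<Sum>i\<le>n. c (Suc i) * q ^ i) = (\<Sum>i\<le>n. d (Suc i) * q ^ i)"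
    using poly_add_mult_eq_cancel by blast+
  show ?case
  proof (cases i)
    case (Suc j)
    then show ?thesis
      using Suc.IH[of "\<lambda>i. c (Suc i)" "\<lambda>i. d (Suc i)" j] Suc.prems tail by simp
  qed (use \<open>c 0 = d 0\<close> in simp)
qed simp

lemma qexp_coeffs:
  fixes q :: "'a::field poly"
  assumes q: "degree q > 0"
  shows qexp_coeffs_sum: "f = (\<Sum>i\<le>degree f. qexp_coeffs q f i * q ^ i)"
    and qexp_coeffs_degree: "qexp_coeffs q f i = 0 \<or> degree (qexp_coeffs q f i) < degree q"
proof -
  let ?P = "\<lambda>c. f = (\<Sum>i\<le>degree f. c i * q ^ i) \<and>
       (\<forall>i. c i = 0 \<or> degree (c i) < degree q) \<and> (\<forall>i>degree f. c i = 0)"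
  obtain c where c: "?P c" using qexpansion_exists[OF q] by blast
  have "d = c" if "?P d" for d
  proof
    fix i show "d i = c i"
      using c that qexpansion_unique[OF q, of d c "degree f" i] by (cases "i \<le> degree f") auto
  qed
  with c have "?P (qexp_coeffs q f)"
    unfolding qexp_coeffs_def by (rule theI)
  then show "f = (\<Sum>i\<le>degree f. qexp_coeffs q f i * q ^ i)"
    and "qexp_coeffs q f i = 0 \<or> degree (qexp_coeffs q f i) < degree q" by blast+
qed

lemma vadd_mono_left: "(x::'g::linordered_ab_group_add vext) \<le> y \<Longrightarrow> vadd x z \<le> vadd y z"
  by (cases x; cases y; cases z) auto

lemma valuation_uminus:
  assumes v: "valuation \<nu>"
  shows "\<nu> (- y) = \<nu> y"
proof -
  have "vadd (\<nu> (-1)) (\<nu> (-1)) = \<nu> ((-1) * (-1))" using v unfolding valuation_def by metis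
  also have "\<dots> = Fin 0" using v by (simp add: valuation_def)
  finally have "\<nu> (-1) = Fin 0" by (cases "\<nu> (-1)") auto
  then have "\<nu> ((-1) * y) = vadd (Fin 0) (\<nu> y)" using v unfolding valuation_def by metis
  then show ?thesis by (cases "\<nu> y") auto
qed

lemma valuation_diff:
  assumes "valuation \<nu>"
  shows "\<nu> (x - y) \<ge> min (\<nu> x) (\<nu> y)"
  using assms valuation_uminus[OF assms, of y] unfolding valuation_def
  by (metis diff_conv_add_uminus)

lemma valuation_ge_subgroup:
  assumes "valuation \<nu>"
  shows "0 \<in> {y. \<nu> y \<ge> \<beta>}"
    and "\<forall>x\<in>{y. \<nu> y \<ge> \<beta>}. \<forall>y\<in>{y. \<nu> y \<ge> \<beta>}. x - y \<in> {y. \<nu> y \<ge> \<beta>}"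
  using assms valuation_diff[OF assms] unfolding valuation_def
  by (auto intro: order_trans[OF min.boundedI])

lemma Qpow_zero: "Qpow (\<lambda>_. 0) = 1"
  by (simp add: Qpow_def)

lemma Qpow_eq_prod:
  assumes "finite S" "{q. lam q \<noteq> 0} \<subseteq> S"
  shows "Qpow lam = (\<Prod>q\<in>S. q ^ lam q)"
  unfolding Qpow_def by (rule prod.mono_neutral_left) (use assms in auto)

lemma Qpow_fun_upd_add:
  assumes "finite {x. lam x \<noteq> 0}"
  shows "Qpow (lam(q := lam q + i)) = Qpow lam * q ^ i"
proof -
  define S where "S = insert q {x. lam x \<noteq> 0}"
  have "finite S" using assms by (simp add: S_def)
  have "Qpow (lam(q := lam q + i)) = (\<Prod>x\<in>S. x ^ (lam(q := lam q + i)) x)"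
    by (rule Qpow_eq_prod[OF \<open>finite S\<close>]) (auto simp: S_def)
  also have "\<dots> = (\<Prod>x\<in>S - {q}. x ^ lam x) * q ^ (lam q + i)"
    using \<open>finite S\<close> by (subst prod.remove[of S q]) (auto simp: S_def mult.commute intro!: prod.cong)
  finally have "Qpow (lam(q := lam q + i)) = (\<Prod>x\<in>S - {q}. x ^ lam x) * q ^ (lam q + i)" .
  moreover have "Qpow lam = (\<Prod>x\<in>S. x ^ lam x)"
    by (rule Qpow_eq_prod[OF \<open>finite S\<close>]) (auto simp: S_def)
  then have "Qpow lam = (\<Prod>x\<in>S - {q}. x ^ lam x) * q ^ lam q"
    using \<open>finite S\<close> by (subst (asm) prod.remove[of S q]) (auto simp: S_def mult.commute)
  ultimately show ?thesis by (simp add: power_add mult.assoc)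
qed

definition Q_monomials :: "'a::field poly set \<Rightarrow> nat \<Rightarrow> 'a poly set" where
  "Q_monomials Q D =
     {smult a (Qpow lam) | a lam. lam \<in> NQ Q \<and> (\<forall>q. lam q \<noteq> 0 \<longrightarrow> degree q \<le> D)}"

lemma const_in_Q_monomials: "[:a:] \<in> Q_monomials Q D"
  unfolding Q_monomials_def NQ_def
  by (auto intro!: exI[of _ a] exI[of _ "\<lambda>_. 0"] simp: Qpow_zero)

lemma Q_monomials_mono: "D \<le> D' \<Longrightarrow> Q_monomials Q D \<subseteq> Q_monomials Q D'"
  unfolding Q_monomials_def by fastforce

lemma Q_monomials_mult_power:
  assumes "m \<in> Q_monomials Q D" "q \<in> Q" "degree q \<le> D"
  shows "m * q ^ i \<in> Q_monomials Q D"
proof -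
  obtain a lam where m: "m = smult a (Qpow lam)" and lam: "lam \<in> NQ Q"
    and deg: "\<forall>q. lam q \<noteq> 0 \<longrightarrow> degree q \<le> D"
    using assms(1) unfolding Q_monomials_def by blast
  define lam' where "lam' = lam(q := lam q + i)"
  have supp: "{x. lam' x \<noteq> 0} \<subseteq> insert q {x. lam x \<noteq> 0}" by (auto simp: lam'_def)
  have "m * q ^ i = smult a (Qpow lam')"
    using lam by (simp add: m lam'_def NQ_def Qpow_fun_upd_add)
  moreover have "lam' \<in> NQ Q"
    using lam assms(2) finite_subset[OF supp] supp by (auto simp: NQ_def)
  moreover have "\<forall>x. lam' x \<noteq> 0 \<longrightarrow> degree x \<le> D" using supp deg assms(3) by blast
  ultimately show ?thesis unfolding Q_monomials_def by blast
qed

definition sums_of :: "'b::monoid_add set \<Rightarrow> 'b set" where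
  "sums_of S = {sum_list xs | xs. set xs \<subseteq> S}"

lemma sums_of_base: "x \<in> S \<Longrightarrow> x \<in> sums_of S"
  unfolding sums_of_def by (intro CollectI exI[of _ "[x]"]) simp

lemma sums_of_mono: "S \<subseteq> T \<Longrightarrow> sums_of S \<subseteq> sums_of T"
  unfolding sums_of_def by blast

lemma sums_of_add:
  assumes "x \<in> sums_of S" "y \<in> sums_of S"
  shows "x + y \<in> sums_of S"
proof -
  obtain xs ys where "x = sum_list xs" "set xs \<subseteq> S" "y = sum_list ys" "set ys \<subseteq> S"
    using assms unfolding sums_of_def by blast
  then have "x + y = sum_list (xs @ ys)" "set (xs @ ys) \<subseteq> S" by auto
  then show ?thesis unfolding sums_of_def by blast
qed

lemma sums_of_sum:
  fixes n :: nat
  shows "(\<And>i. i \<le> n \<Longrightarrow> f i \<in> sums_of S) \<Longrightarrow> (\<Sum>i\<le>n. f i) \<in> sums_of S"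
  by (induction n) (simp_all add: sums_of_add)

lemma sums_of_mult_right:
  assumes "x \<in> sums_of S" "\<And>m. m \<in> S \<Longrightarrow> m * c \<in> T"
  shows "x * c \<in> sums_of (T :: 'b::semiring_0 set)"
proof -
  obtain xs where "x = sum_list xs" "set xs \<subseteq> S" using assms(1) unfolding sums_of_def by blast
  then have "x * c = sum_list (map (\<lambda>m. m * c) xs)" "set (map (\<lambda>m. m * c) xs) \<subseteq> T"
    using assms(2) by (auto simp: sum_list_mult_const)
  then show ?thesis unfolding sums_of_def by blast
qed

lemma sums_of_indexed:
  assumes "x \<in> sums_of S"
  obtains r :: nat and f where "\<forall>i<r. f i \<in> S" "x = (\<Sum>i<r. f i)"
proof -
  obtain xs where "x = sum_list xs" "set xs \<subseteq> S" using assms unfolding sums_of_def by blast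
  then have "\<forall>i<length xs. xs ! i \<in> S" "x = (\<Sum>i<length xs. xs ! i)"
    by (auto simp: sum_list_sum_nth atLeast0LessThan)
  then show ?thesis by (rule that)
qed

lemma sums_of_subset_add_subgroup_gen: "sums_of S \<subseteq> add_subgroup_gen (S::'b::ab_group_add set)"
proof
  fix x assume "x \<in> sums_of S"
  then obtain xs where x: "x = sum_list xs" "set xs \<subseteq> S" unfolding sums_of_def by blast
  have "sum_list xs \<in> H" if H: "0 \<in> H" "\<forall>x\<in>H. \<forall>y\<in>H. x - y \<in> H" "S \<subseteq> H" for H
  proof -
    have "a + b \<in> H" if "a \<in> H" "b \<in> H" for a b
      using H(2) \<open>0 \<in> H\<close> that by (metis diff_0 diff_minus_eq_add)
    then show ?thesis using x(2) H by (induction xs) auto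
  qed
  then show "x \<in> add_subgroup_gen S" unfolding add_subgroup_gen_def x(1) by blast
qed

lemma add_subgroup_gen_least:
  "0 \<in> H \<Longrightarrow> \<forall>x\<in>H. \<forall>y\<in>H. x - y \<in> H \<Longrightarrow> S \<subseteq> H \<Longrightarrow> add_subgroup_gen S \<subseteq> H"
  unfolding add_subgroup_gen_def by blast

lemma sums_of_smult_Qpow:
  assumes "p \<in> sums_of {smult a (Qpow lam) | a lam. P a lam}"
  obtains r :: nat and a lam
  where "\<forall>i<r. P (a i) (lam i)" "p = (\<Sum>i<r. smult (a i) (Qpow (lam i)))"
proof -
  obtain r :: nat and f where f: "\<forall>i<r. f i \<in> {smult a (Qpow lam) | a lam. P a lam}"
    and p: "p = (\<Sum>i<r. f i)"
    using assms by (rule sums_of_indexed)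
  then obtain a lam where "\<forall>i<r. f i = smult (a i) (Qpow (lam i)) \<and> P (a i) (lam i)"
    by (simp only: mem_Collect_eq) metis
  moreover from this have "p = (\<Sum>i<r. smult (a i) (Qpow (lam i)))"
    unfolding p by (intro sum.cong) auto
  ultimately show ?thesis using that by blast
qed

lemma sums_of_Q_monomials:
  assumes v: "valuation \<nu>" and cs: "complete_set \<nu> Q"
  shows "p \<in> sums_of {m \<in> Q_monomials Q (degree p). \<nu> m \<ge> \<nu> p}"
proof (induction "degree p" arbitrary: p rule: less_induct)
  case less
  show ?case
  proof (cases "degree p = 0")
    case True
    then obtain a where "p = [:a:]" by (rule degree_eq_zeroE)
    then show ?thesis using const_in_Q_monomials[of a Q "degree p"] by (auto intro: sums_of_base)
  next
    case False
    then obtain q where q: "q \<in> Q" "degree q \<le> degree p" "\<nu> p = qtrunc \<nu> q p"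
      using cs unfolding complete_set_def by blast
    have "degree q > 0" using cs q(1) unfolding complete_set_def by blast
    let ?c = "qexp_coeffs q p"
    have "?c i * q ^ i \<in> sums_of {m \<in> Q_monomials Q (degree p). \<nu> m \<ge> \<nu> p}"
      if i: "i \<le> degree p" for i
    proof -
      have dc: "degree (?c i) < degree p"
        using qexp_coeffs_degree[OF \<open>degree q > 0\<close>, of p i] q(2) False by auto
      have trunc: "\<nu> p \<le> \<nu> (?c i * q ^ i)"
        unfolding q(3) qtrunc_def by (rule Min_le) (use i in auto)
      show ?thesis
      proof (rule sums_of_mult_right[OF less[OF dc]])
        fix m assume m: "m \<in> {m \<in> Q_monomials Q (degree (?c i)). \<nu> m \<ge> \<nu> (?c i)}"
        then have "m * q ^ i \<in> Q_monomials Q (degree p)"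
          using Q_monomials_mono[of "degree (?c i)" "degree p"] dc q
          by (intro Q_monomials_mult_power) auto
        moreover have "\<nu> (?c i * q ^ i) \<le> \<nu> (m * q ^ i)"
          using v m vadd_mono_left[of "\<nu> (?c i)" "\<nu> m"] unfolding valuation_def by auto
        ultimately show "m * q ^ i \<in> {m \<in> Q_monomials Q (degree p). \<nu> m \<ge> \<nu> p}"
          using trunc by auto
      qed
    qed
    then have "(\<Sum>i\<le>degree p. ?c i * q ^ i)
                 \<in> sums_of {m \<in> Q_monomials Q (degree p). \<nu> m \<ge> \<nu> p}"
      by (rule sums_of_sum)
    then show ?thesis using qexp_coeffs_sum[OF \<open>degree q > 0\<close>, of p] by simp
  qed
qed

theorem mainTheorem1:
  fixes \<nu> :: "'a::field poly \<Rightarrow> 'g::linordered_ab_group_add vext"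
    and Q :: "'a poly set"
  assumes "valuation \<nu>" and "complete_set \<nu> Q"
  shows "(\<forall>p. \<exists>(r::nat) (a::nat \<Rightarrow> 'a) lam.
            (\<forall>i<r. lam i \<in> NQ Q) \<and>
            p = (\<Sum>i<r. smult (a i) (Qpow (lam i))) \<and>
            (\<forall>i<r. \<nu> (smult (a i) (Qpow (lam i))) \<ge> \<nu> p) \<and>
            (\<forall>i<r. \<forall>q. lam i q \<noteq> 0 \<longrightarrow> degree q \<le> degree p))
       \<and> (\<forall>\<beta>\<in>range \<nu>.
            {y. \<nu> y \<ge> \<beta>} =
            add_subgroup_gen {smult a (Qpow lam) | a lam.
                               lam \<in> NQ Q \<and> \<nu> (smult a (Qpow lam)) \<ge> \<beta>})"
proof (intro conjI allI ballI)
  fix p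
  have "{m \<in> Q_monomials Q (degree p). \<nu> m \<ge> \<nu> p} =
        {smult a (Qpow lam) | a lam. lam \<in> NQ Q \<and> (\<forall>q. lam q \<noteq> 0 \<longrightarrow> degree q \<le> degree p)
                                   \<and> \<nu> (smult a (Qpow lam)) \<ge> \<nu> p}"
    unfolding Q_monomials_def by blast
  with sums_of_Q_monomials[OF assms, of p]
  obtain r :: nat and a lam
    where "\<forall>i<r. lam i \<in> NQ Q \<and> (\<forall>q. lam i q \<noteq> 0 \<longrightarrow> degree q \<le> degree p)
                 \<and> \<nu> (smult (a i) (Qpow (lam i))) \<ge> \<nu> p"
      and "p = (\<Sum>i<r. smult (a i) (Qpow (lam i)))"
    by (auto elim!: sums_of_smult_Qpow)
  then show "\<exists>(r::nat) (a::nat \<Rightarrow> 'a) lam. (\<forall>i<r. lam i \<in> NQ Q) \<and>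
            p = (\<Sum>i<r. smult (a i) (Qpow (lam i))) \<and>
            (\<forall>i<r. \<nu> (smult (a i) (Qpow (lam i))) \<ge> \<nu> p) \<and>
            (\<forall>i<r. \<forall>q. lam i q \<noteq> 0 \<longrightarrow> degree q \<le> degree p)"
    by blast
next
  fix \<beta>
  let ?S = "{smult a (Qpow lam) | a lam. lam \<in> NQ Q \<and> \<nu> (smult a (Qpow lam)) \<ge> \<beta>}"
  have "y \<in> sums_of ?S" if "\<nu> y \<ge> \<beta>" for y
  proof -
    have "{m \<in> Q_monomials Q (degree y). \<nu> m \<ge> \<nu> y} \<subseteq> ?S"
      using that unfolding Q_monomials_def by (blast intro: order_trans)
    then show ?thesis using sums_of_Q_monomials[OF assms, of y] sums_of_mono by blast
  qed
  then have "{y. \<nu> y \<ge> \<beta>} \<subseteq> add_subgroup_gen ?S"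
    using sums_of_subset_add_subgroup_gen by blast
  moreover have "add_subgroup_gen ?S \<subseteq> {y. \<nu> y \<ge> \<beta>}"
    using valuation_ge_subgroup[OF assms(1), of \<beta>] by (intro add_subgroup_gen_least) auto
  ultimately show "{y. \<nu> y \<ge> \<beta>} = add_subgroup_gen ?S" ..
qed

end
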